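(* Let $\mathcal X,\mathcal Y$ be finite sets, $\mathcal A$ an action set, $L:\mathcal Y\times\mathcal A\to\mathbb R$ a loss function, $d\ge0$ an integer and $f:\mathcal X\to\mathcal Y$ a function. Let $\{X_t\}$ be a process with values in $\mathcal X$ and $Y_t=f(X_{t-d})$. If $X_t\leftrightarrow X_{t-\mu}\leftrightarrow X_{t-\mu-\nu}$ is a Markov chain for all integers $\mu,\nu\ge0$, then $H_L(Y_t\mid X_{t-\delta})$ is (weakly) decreasing in $\delta$ for $0\le\delta<d$ and (weakly) increasing in $\delta$ for $\delta\ge d$. In addition, for any random variable $Z$ with values in $\mathcal X$, $$H_L(Y_t\mid X_{t-d})=H_L(Y_t\mid Y_t)\le H_L(Y_t\mid Z).$$
   Context: $H_L(Y\mid X)=\sum_xP_X(x)\min_{a\in\mathcal A}\mathbb E_{Y\sim P_{Y\mid X=x}}[L(Y,a)]$ is the $L$-conditional entropy (minima assumed attained). *)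

theory Defs
  imports "HOL-Probability.Probability"
begin

definition cond_risk :: "'w measure \<Rightarrow> ('y::finite \<Rightarrow> 'a \<Rightarrow> real) \<Rightarrow> ('w \<Rightarrow> 'y) \<Rightarrow> ('w \<Rightarrow> 'c) \<Rightarrow> 'c \<Rightarrow> 'a \<Rightarrow> real" where
  "cond_risk M L Y X x a =
     (\<Sum>y\<in>UNIV. measure M {w \<in> space M. Y w = y \<and> X w = x} / measure M {w \<in> space M. X w = x} * L y a)"

definition condH :: "'w measure \<Rightarrow> ('y::finite \<Rightarrow> 'a \<Rightarrow> real) \<Rightarrow> 'a set \<Rightarrow> ('w \<Rightarrow> 'y) \<Rightarrow> ('w \<Rightarrow> 'c::finite) \<Rightarrow> real" where
  "condH M L A Y X =
     (\<Sum>x\<in>UNIV. measure M {w \<in> space M. X w = x} * (INF a\<in>A. cond_risk M L Y X x a))"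

definition min_attained :: "'w measure \<Rightarrow> ('y::finite \<Rightarrow> 'a \<Rightarrow> real) \<Rightarrow> 'a set \<Rightarrow> ('w \<Rightarrow> 'y) \<Rightarrow> ('w \<Rightarrow> 'c) \<Rightarrow> bool" where
  "min_attained M L A Y X \<longleftrightarrow>
     (\<forall>x. measure M {w \<in> space M. X w = x} > 0 \<longrightarrow>
        (\<exists>a\<in>A. \<forall>b\<in>A. cond_risk M L Y X x a \<le> cond_risk M L Y X x b))"

text \<open>U <-> V <-> W is a Markov chain: U and W conditionally independent given V,
  i.e. P(u,w|v) = P(u|v) P(w|v), written multiplicatively.\<close>
definition markov_chain :: "'w measure \<Rightarrow> ('w \<Rightarrow> 'u) \<Rightarrow> ('w \<Rightarrow> 'v) \<Rightarrow> ('w \<Rightarrow> 'z) \<Rightarrow> bool" where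
  "markov_chain M U V W \<longleftrightarrow>
     (\<forall>u v z. measure M {w \<in> space M. U w = u \<and> V w = v \<and> W w = z} * measure M {w \<in> space M. V w = v}
        = measure M {w \<in> space M. U w = u \<and> V w = v} * measure M {w \<in> space M. V w = v \<and> W w = z})"

end

theory Submission
  imports Defs
begin

text \<open>All four claims are instances of a data processing inequality for the L-conditional entropy:
  if \<open>Y \<leftrightarrow> V \<leftrightarrow> W\<close> is a Markov chain then \<open>H\<^sub>L(Y | V) \<le> H\<^sub>L(Y | W)\<close>. Given \<open>W = c\<close>, the law
  of \<open>Y\<close> is the mixture over \<open>v\<close> of its laws given \<open>V = v\<close> with weights \<open>P(V = v | W = c)\<close>, so the
  best single action for \<open>W = c\<close> cannot beat the best actions chosen separately for each \<open>V = v\<close>.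
  The monotonicity claims use the chains \<open>Y(t) \<leftrightarrow> X(t - \<delta>2) \<leftrightarrow> X(t - \<delta>1)\<close> for \<open>\<delta>1 \<le> \<delta>2 < d\<close>
  and \<open>Y(t) \<leftrightarrow> X(t - \<delta>1) \<leftrightarrow> X(t - \<delta>2)\<close> for \<open>d \<le> \<delta>1 \<le> \<delta>2\<close>, obtained from the Markov property
  of the process by reversal and by applying \<open>f\<close>. Since \<open>Y(t) = f(X(t - d))\<close>, the chains
  \<open>Y(t) \<leftrightarrow> X(t - d) \<leftrightarrow> Y(t)\<close>, \<open>Y(t) \<leftrightarrow> Y(t) \<leftrightarrow> X(t - d)\<close> and \<open>Y(t) \<leftrightarrow> Y(t) \<leftrightarrow> Z\<close> hold
  trivially and give the remaining claims.\<close>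

lemma measure_eq_sum_values:
  assumes "finite_measure M" and [measurable]: "W \<in> M \<rightarrow>\<^sub>M count_space UNIV" "Measurable.pred M Q"
    and "finite S"
  shows "measure M {w\<in>space M. W w \<in> S \<and> Q w} = (\<Sum>c\<in>S. measure M {w\<in>space M. W w = c \<and> Q w})"
proof -
  interpret finite_measure M by fact
  have "{w\<in>space M. W w \<in> S \<and> Q w} = (\<Union>c\<in>S. {w\<in>space M. W w = c \<and> Q w})"
    by auto
  also have "measure M \<dots> = (\<Sum>c\<in>S. measure M {w\<in>space M. W w = c \<and> Q w})"
    by (rule finite_measure_finite_Union) (use \<open>finite S\<close> in \<open>auto simp: disjoint_family_on_def\<close>)
  finally show ?thesis .
qed

corollary measure_eq_sum_joint:
  fixes W :: "'w \<Rightarrow> 'c::finite"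
  assumes "finite_measure M" "W \<in> M \<rightarrow>\<^sub>M count_space UNIV" "Measurable.pred M Q"
  shows "measure M {w\<in>space M. Q w} = (\<Sum>c\<in>UNIV. measure M {w\<in>space M. W w = c \<and> Q w})"
  using measure_eq_sum_values[OF assms, of UNIV] by simp

lemma measure_Collect_eq_0_mono:
  assumes "finite_measure M" "{w\<in>space M. Q w} \<in> sets M" "measure M {w\<in>space M. Q w} = 0"
    and "\<And>w. P w \<Longrightarrow> Q w"
  shows "measure M {w\<in>space M. P w} = 0"
proof -
  have "measure M {w\<in>space M. P w} \<le> measure M {w\<in>space M. Q w}"
    using assms(4) by (intro finite_measure.finite_measure_mono[OF assms(1) _ assms(2)]) auto
  then show ?thesis
    using assms(3) by (simp add: measure_le_0_iff)
qed

lemma markov_chain_sym: "markov_chain M U V W \<Longrightarrow> markov_chain M W V U"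
  unfolding markov_chain_def by (simp add: conj_ac mult_ac)

lemma markov_chain_fun_of_middle: "markov_chain M (g \<circ> V) V W"
  unfolding markov_chain_def
proof (intro allI)
  fix u v z
  show "measure M {w \<in> space M. (g \<circ> V) w = u \<and> V w = v \<and> W w = z} * measure M {w \<in> space M. V w = v}
      = measure M {w \<in> space M. (g \<circ> V) w = u \<and> V w = v} * measure M {w \<in> space M. V w = v \<and> W w = z}"
  proof (cases "g v = u")
    case True
    then have "{w \<in> space M. (g \<circ> V) w = u \<and> V w = v \<and> W w = z} = {w \<in> space M. V w = v \<and> W w = z}"
      and "{w \<in> space M. (g \<circ> V) w = u \<and> V w = v} = {w \<in> space M. V w = v}"
      by auto
    then show ?thesis by simp
  next
    case False
    then have "{w \<in> space M. (g \<circ> V) w = u \<and> V w = v \<and> W w = z} = {}"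
      and "{w \<in> space M. (g \<circ> V) w = u \<and> V w = v} = {}"
      by auto
    then show ?thesis by (simp only: measure_empty mult_zero_left)
  qed
qed

corollary markov_chain_left_eq_middle: "markov_chain M V V W"
  using markov_chain_fun_of_middle[of M id V W] by simp

lemma markov_chain_comp_left:
  fixes U :: "'w \<Rightarrow> 'u::finite"
  assumes "finite_measure M" "markov_chain M U V W"
    and [measurable]: "U \<in> M \<rightarrow>\<^sub>M count_space UNIV" "V \<in> M \<rightarrow>\<^sub>M count_space UNIV"
      "W \<in> M \<rightarrow>\<^sub>M count_space UNIV"
  shows "markov_chain M (f \<circ> U) V W"
  unfolding markov_chain_def
proof (intro allI)
  fix y v z
  have fibre: "measure M {w\<in>space M. (f \<circ> U) w = y \<and> Q w}
      = (\<Sum>u\<in>{u. f u = y}. measure M {w\<in>space M. U w = u \<and> Q w})"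
    if "Measurable.pred M Q" for Q
    using measure_eq_sum_values[OF assms(1,3) that, of "{u. f u = y}"] by simp
  have "measure M {w\<in>space M. (f \<circ> U) w = y \<and> V w = v \<and> W w = z}
      = (\<Sum>u\<in>{u. f u = y}. measure M {w\<in>space M. U w = u \<and> V w = v \<and> W w = z})"
    and "measure M {w\<in>space M. (f \<circ> U) w = y \<and> V w = v}
      = (\<Sum>u\<in>{u. f u = y}. measure M {w\<in>space M. U w = u \<and> V w = v})"
    by (rule fibre; measurable)+
  then show "measure M {w \<in> space M. (f \<circ> U) w = y \<and> V w = v \<and> W w = z} * measure M {w \<in> space M. V w = v}
      = measure M {w \<in> space M. (f \<circ> U) w = y \<and> V w = v} * measure M {w \<in> space M. V w = v \<and> W w = z}"
    using assms(2) unfolding markov_chain_def by (simp only: sum_distrib_right)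
qed

text \<open>This also holds when \<open>P(V = v) = 0\<close>: then both sides vanish, the right one because \<open>x / 0 = 0\<close>.\<close>

lemma markov_chain_factor:
  assumes "finite_measure M" "markov_chain M U V W" "V \<in> M \<rightarrow>\<^sub>M count_space UNIV"
  shows "measure M {w\<in>space M. U w = u \<and> V w = v \<and> W w = z}
    = measure M {w\<in>space M. U w = u \<and> V w = v} / measure M {w\<in>space M. V w = v}
      * measure M {w\<in>space M. V w = v \<and> W w = z}"
proof (cases "measure M {w\<in>space M. V w = v} = 0")
  case True
  have "{w\<in>space M. V w = v} \<in> sets M"
    using assms(3) by measurable
  then have "measure M {w\<in>space M. U w = u \<and> V w = v \<and> W w = z} = 0"
    using True by (rule measure_Collect_eq_0_mono[OF assms(1)]) simp
  with True show ?thesis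
    by simp
next
  case False
  have "measure M {w\<in>space M. U w = u \<and> V w = v \<and> W w = z} * measure M {w\<in>space M. V w = v}
      = measure M {w\<in>space M. U w = u \<and> V w = v} * measure M {w\<in>space M. V w = v \<and> W w = z}"
    using assms(2) unfolding markov_chain_def by blast
  with False show ?thesis
    by (simp add: field_simps)
qed

lemma measure_mult_cond_risk:
  assumes "finite_measure M" "X \<in> M \<rightarrow>\<^sub>M count_space UNIV"
  shows "measure M {w\<in>space M. X w = x} * cond_risk M L Y X x a
    = (\<Sum>y\<in>UNIV. measure M {w\<in>space M. Y w = y \<and> X w = x} * L y a)"
proof (cases "measure M {w\<in>space M. X w = x} = 0")
  case True
  have "{w\<in>space M. X w = x} \<in> sets M"
    using assms(2) by measurable
  then have "measure M {w\<in>space M. Y w = y \<and> X w = x} = 0" for y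
    using True by (rule measure_Collect_eq_0_mono[OF assms(1)]) simp
  with True show ?thesis
    by simp
qed (simp add: cond_risk_def sum_distrib_left)

lemma cond_risk_markov_mixture:
  fixes Y :: "'w \<Rightarrow> 'y::finite" and V :: "'w \<Rightarrow> 'v::finite"
  assumes "finite_measure M" "markov_chain M Y V W"
    and [measurable]: "Y \<in> M \<rightarrow>\<^sub>M count_space UNIV" "V \<in> M \<rightarrow>\<^sub>M count_space UNIV"
      "W \<in> M \<rightarrow>\<^sub>M count_space UNIV"
  shows "measure M {w\<in>space M. W w = c} * cond_risk M L Y W c a
    = (\<Sum>v\<in>UNIV. measure M {w\<in>space M. V w = v \<and> W w = c} * cond_risk M L Y V v a)"
proof -
  have joint: "measure M {w\<in>space M. Y w = y \<and> W w = c}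
      = (\<Sum>v\<in>UNIV. measure M {w\<in>space M. Y w = y \<and> V w = v \<and> W w = c})" for y
    using measure_eq_sum_joint[OF assms(1,4), of "\<lambda>w. Y w = y \<and> W w = c"]
    by (simp add: conj_ac)
  have "measure M {w\<in>space M. W w = c} * cond_risk M L Y W c a
      = (\<Sum>y\<in>UNIV. measure M {w\<in>space M. Y w = y \<and> W w = c} * L y a)"
    by (rule measure_mult_cond_risk[OF assms(1,5)])
  also have "\<dots> = (\<Sum>y\<in>UNIV. \<Sum>v\<in>UNIV. measure M {w\<in>space M. Y w = y \<and> V w = v}
      / measure M {w\<in>space M. V w = v} * measure M {w\<in>space M. V w = v \<and> W w = c} * L y a)"
    by (simp add: joint markov_chain_factor[OF assms(1,2,4)] sum_distrib_right)
  also have "\<dots> = (\<Sum>v\<in>UNIV. measure M {w\<in>space M. V w = v \<and> W w = c} * cond_risk M L Y V v a)"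
    by (subst sum.swap) (simp add: cond_risk_def sum_distrib_left mult_ac)
  finally show ?thesis .
qed

lemma INF_cond_risk_attained:
  assumes "min_attained M L A Y X" "0 < measure M {w\<in>space M. X w = x}"
  obtains a where "a \<in> A" "(INF b\<in>A. cond_risk M L Y X x b) = cond_risk M L Y X x a"
    and "\<And>b. b \<in> A \<Longrightarrow> cond_risk M L Y X x a \<le> cond_risk M L Y X x b"
proof -
  obtain a where a: "a \<in> A" and min: "\<And>b. b \<in> A \<Longrightarrow> cond_risk M L Y X x a \<le> cond_risk M L Y X x b"
    using assms unfolding min_attained_def by blast
  have "(INF b\<in>A. cond_risk M L Y X x b) = cond_risk M L Y X x a"
    by (rule cInf_eq_minimum) (use a min in auto)
  from a this min show ?thesis
    by (rule that)
qed

lemma weighted_INF_cond_risk_le: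
  fixes Y :: "'w \<Rightarrow> 'y::finite" and V :: "'w \<Rightarrow> 'v::finite"
  assumes "finite_measure M" "markov_chain M Y V W"
    and [measurable]: "Y \<in> M \<rightarrow>\<^sub>M count_space UNIV" "V \<in> M \<rightarrow>\<^sub>M count_space UNIV"
      "W \<in> M \<rightarrow>\<^sub>M count_space UNIV"
    and "min_attained M L A Y V" "min_attained M L A Y W"
  shows "(\<Sum>v\<in>UNIV. measure M {w\<in>space M. V w = v \<and> W w = c} * (INF a\<in>A. cond_risk M L Y V v a))
    \<le> measure M {w\<in>space M. W w = c} * (INF a\<in>A. cond_risk M L Y W c a)"
proof (cases "measure M {w\<in>space M. W w = c} = 0")
  case True
  have "{w\<in>space M. W w = c} \<in> sets M"
    by measurable
  then have "measure M {w\<in>space M. V w = v \<and> W w = c} = 0" for v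
    using True by (rule measure_Collect_eq_0_mono[OF assms(1)]) simp
  with True show ?thesis by simp
next
  case False
  then have "0 < measure M {w\<in>space M. W w = c}"
    by (simp add: zero_less_measure_iff)
  with assms(7) obtain a where "a \<in> A" and a: "(INF b\<in>A. cond_risk M L Y W c b) = cond_risk M L Y W c a"
    by (rule INF_cond_risk_attained)
  have "measure M {w\<in>space M. V w = v \<and> W w = c} * (INF b\<in>A. cond_risk M L Y V v b)
      \<le> measure M {w\<in>space M. V w = v \<and> W w = c} * cond_risk M L Y V v a" for v
  proof (cases "measure M {w\<in>space M. V w = v} = 0")
    case True
    have "{w\<in>space M. V w = v} \<in> sets M"
      by measurable
    then have "measure M {w\<in>space M. V w = v \<and> W w = c} = 0"
      using True by (rule measure_Collect_eq_0_mono[OF assms(1)]) simp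
    then show ?thesis by simp
  next
    case False
    then have "0 < measure M {w\<in>space M. V w = v}"
      by (simp add: zero_less_measure_iff)
    with assms(6) obtain b where "b \<in> A" and b: "(INF b\<in>A. cond_risk M L Y V v b) = cond_risk M L Y V v b"
      and "\<And>b'. b' \<in> A \<Longrightarrow> cond_risk M L Y V v b \<le> cond_risk M L Y V v b'"
      by (rule INF_cond_risk_attained) blast
    then have "(INF b\<in>A. cond_risk M L Y V v b) \<le> cond_risk M L Y V v a"
      using \<open>a \<in> A\<close> by simp
    then show ?thesis
      by (simp add: mult_left_mono)
  qed
  then have "(\<Sum>v\<in>UNIV. measure M {w\<in>space M. V w = v \<and> W w = c} * (INF b\<in>A. cond_risk M L Y V v b))
      \<le> (\<Sum>v\<in>UNIV. measure M {w\<in>space M. V w = v \<and> W w = c} * cond_risk M L Y V v a)"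
    by (rule sum_mono)
  also have "\<dots> = measure M {w\<in>space M. W w = c} * (INF b\<in>A. cond_risk M L Y W c b)"
    unfolding a by (rule cond_risk_markov_mixture[OF assms(1-5), symmetric])
  finally show ?thesis .
qed

theorem condH_data_processing:
  fixes Y :: "'w \<Rightarrow> 'y::finite" and V :: "'w \<Rightarrow> 'v::finite" and W :: "'w \<Rightarrow> 'c::finite"
  assumes "finite_measure M" "markov_chain M Y V W"
    and [measurable]: "Y \<in> M \<rightarrow>\<^sub>M count_space UNIV" "V \<in> M \<rightarrow>\<^sub>M count_space UNIV"
      "W \<in> M \<rightarrow>\<^sub>M count_space UNIV"
    and "min_attained M L A Y V" "min_attained M L A Y W"
  shows "condH M L A Y V \<le> condH M L A Y W"
proof -
  have marginal: "measure M {w\<in>space M. V w = v} = (\<Sum>c\<in>UNIV. measure M {w\<in>space M. V w = v \<and> W w = c})"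
    for v
    using measure_eq_sum_joint[OF assms(1,5), of "\<lambda>w. V w = v"] by (simp add: conj_ac)
  have "condH M L A Y V = (\<Sum>v\<in>UNIV. \<Sum>c\<in>UNIV.
      measure M {w\<in>space M. V w = v \<and> W w = c} * (INF a\<in>A. cond_risk M L Y V v a))"
    unfolding condH_def marginal sum_distrib_right ..
  also have "\<dots> = (\<Sum>c\<in>UNIV. \<Sum>v\<in>UNIV.
      measure M {w\<in>space M. V w = v \<and> W w = c} * (INF a\<in>A. cond_risk M L Y V v a))"
    by (rule sum.swap)
  also have "\<dots> \<le> (\<Sum>c\<in>UNIV. measure M {w\<in>space M. W w = c} * (INF a\<in>A. cond_risk M L Y W c a))"
    by (intro sum_mono weighted_INF_cond_risk_le[OF assms])
  also have "\<dots> = condH M L A Y W"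
    unfolding condH_def ..
  finally show ?thesis .
qed

corollary condH_comp_data_processing:
  fixes U :: "'w \<Rightarrow> 'u::finite" and V :: "'w \<Rightarrow> 'v::finite" and W :: "'w \<Rightarrow> 'c::finite"
    and f :: "'u \<Rightarrow> 'y::finite"
  assumes "finite_measure M" "markov_chain M U V W"
    and "U \<in> M \<rightarrow>\<^sub>M count_space UNIV" "V \<in> M \<rightarrow>\<^sub>M count_space UNIV"
      "W \<in> M \<rightarrow>\<^sub>M count_space UNIV"
    and "min_attained M L A (f \<circ> U) V" "min_attained M L A (f \<circ> U) W"
  shows "condH M L A (f \<circ> U) V \<le> condH M L A (f \<circ> U) W"
proof (rule condH_data_processing[OF assms(1) markov_chain_comp_left[OF assms(1-5)] _ assms(4-7)])
  show "f \<circ> U \<in> M \<rightarrow>\<^sub>M count_space UNIV"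
    using assms(3) by measurable
qed

lemma markov_chain_of_ordered_times:
  fixes X :: "int \<Rightarrow> 'w \<Rightarrow> 'x"
  assumes "\<And>s (\<mu>::nat) (\<nu>::nat). markov_chain M (X s) (X (s - int \<mu>)) (X (s - int \<mu> - int \<nu>))"
    and "r \<le> s" "s \<le> u"
  shows "markov_chain M (X u) (X s) (X r)"
  using assms(1)[of u "nat (u - s)" "nat (s - r)"] assms(2,3) by simp

theorem lemma4:
  fixes M :: "'w measure"
    and X :: "int \<Rightarrow> 'w \<Rightarrow> 'x::finite"
    and f :: "'x \<Rightarrow> 'y::finite"
    and L :: "'y \<Rightarrow> 'a \<Rightarrow> real"
    and A :: "'a set"
    and d :: nat
    and t :: int
    and Z :: "'w \<Rightarrow> 'x"
  assumes "prob_space M"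
    and meas: "\<And>s. X s \<in> measurable M (count_space UNIV)"
    and Zmeas: "Z \<in> measurable M (count_space UNIV)"
    and markov: "\<And>s (\<mu>::nat) (\<nu>::nat). markov_chain M (X s) (X (s - int \<mu>)) (X (s - int \<mu> - int \<nu>))"
    and att: "\<And>s u. min_attained M L A (f \<circ> X (s - int d)) (X u)"
    and attY: "\<And>s. min_attained M L A (f \<circ> X (s - int d)) (f \<circ> X (s - int d))"
    and attZ: "\<And>s. min_attained M L A (f \<circ> X (s - int d)) Z"
  shows "(\<forall>\<delta>1 \<delta>2. \<delta>1 \<le> \<delta>2 \<and> \<delta>2 < d \<longrightarrow>
            condH M L A (f \<circ> X (t - int d)) (X (t - int \<delta>2))
              \<le> condH M L A (f \<circ> X (t - int d)) (X (t - int \<delta>1)))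
       \<and> (\<forall>\<delta>1 \<delta>2. d \<le> \<delta>1 \<and> \<delta>1 \<le> \<delta>2 \<longrightarrow>
            condH M L A (f \<circ> X (t - int d)) (X (t - int \<delta>1))
              \<le> condH M L A (f \<circ> X (t - int d)) (X (t - int \<delta>2)))
       \<and> condH M L A (f \<circ> X (t - int d)) (X (t - int d))
           = condH M L A (f \<circ> X (t - int d)) (f \<circ> X (t - int d))
       \<and> condH M L A (f \<circ> X (t - int d)) (f \<circ> X (t - int d))
           \<le> condH M L A (f \<circ> X (t - int d)) Z"
proof -
  have fin: "finite_measure M"
    using assms(1) by (rule prob_space.axioms)
  define Y where "Y = f \<circ> X (t - int d)"
  have Ymeas: "Y \<in> M \<rightarrow>\<^sub>M count_space UNIV"
    unfolding Y_def using meas by measurable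
  have attX: "min_attained M L A Y (X u)" for u
    unfolding Y_def by (rule att)
  have attYY: "min_attained M L A Y Y" and attYZ: "min_attained M L A Y Z"
    unfolding Y_def by (rule attY attZ)+
  have along_X: "condH M L A Y (X r) \<le> condH M L A Y (X s)"
    if "markov_chain M (X (t - int d)) (X r) (X s)" for r s
    unfolding Y_def by (rule condH_comp_data_processing[OF fin that meas meas meas att att])
  have chain: "markov_chain M (X u) (X s) (X r)" if "r \<le> s" "s \<le> u" for r s u
    using markov that by (rule markov_chain_of_ordered_times)
  have YXY: "markov_chain M Y (X (t - int d)) Y"
    unfolding Y_def by (rule markov_chain_fun_of_middle)
  note dpi = condH_data_processing[OF fin]
  have "condH M L A Y (X (t - int \<delta>2)) \<le> condH M L A Y (X (t - int \<delta>1))"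
    if "\<delta>1 \<le> \<delta>2" "\<delta>2 < d" for \<delta>1 \<delta>2
    using that by (intro along_X markov_chain_sym[OF chain]) simp_all
  moreover have "condH M L A Y (X (t - int \<delta>1)) \<le> condH M L A Y (X (t - int \<delta>2))"
    if "d \<le> \<delta>1" "\<delta>1 \<le> \<delta>2" for \<delta>1 \<delta>2
    using that by (intro along_X chain) simp_all
  moreover have "condH M L A Y (X (t - int d)) = condH M L A Y Y"
    using dpi[OF YXY Ymeas meas Ymeas attX attYY]
      dpi[OF markov_chain_left_eq_middle Ymeas Ymeas meas attYY attX]
    by (rule order_antisym)
  moreover have "condH M L A Y Y \<le> condH M L A Y Z"
    by (rule dpi[OF markov_chain_left_eq_middle Ymeas Ymeas Zmeas attYY attYZ])
  ultimately show ?thesis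
    unfolding Y_def by blast
qed

end
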